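(* For every non-trivial projective core $H$ there exist a graph $F$ and two vertices $u^*,v^*\in V(F)$ such that: (a) for all $x,y\in V(H)$ with $x\ne y$ there is a homomorphism $f\colon F\to H$ with $f(u^* )=x$ and $f(v^* )=y$; (b) every homomorphism $f\colon F\to H$ satisfies $f(u^* )\ne f(v^* )$.
   Context: Graphs are finite, undirected, without parallel edges, loops allowed; $K_1^*$ is the one-vertex graph with a loop. A homomorphism is an edge-preserving vertex map. A core is a graph with no homomorphism to a proper subgraph of itself; a core is trivial if isomorphic to $K_1$, $K_1^*$ or $K_2$, non-trivial otherwise. The direct product $H_1\times H_2$ has vertex set $V(H_1)\times V(H_2)$ with $(x_1,y_1)(x_2,y_2)$ an edge iff $x_1x_2\in E(H_1)$ and $y_1y_2\in E(H_2)$; $H^m$ is the $m$-fold product and $\pi_i(x_1,\dots,x_m)=x_i$. A homomorphism $f\colon H^m\to H$ is idempotent if $f(x,\dots,x)=x$ for all $x$. $H$ is projective if for every $m\ge2$ every idempotent homomorphism $H^m\to H$ equals some $\pi_i$. *)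

theory Defs
  imports Main
begin

type_synonym 'a graph = "'a set \<times> ('a \<times> 'a) set"

definition is_graph :: "'a graph \<Rightarrow> bool" where
  "is_graph G \<longleftrightarrow> finite (fst G) \<and> snd G \<subseteq> fst G \<times> fst G \<and> sym (snd G)"

definition is_hom :: "'a graph \<Rightarrow> 'b graph \<Rightarrow> ('a \<Rightarrow> 'b) \<Rightarrow> bool" where
  "is_hom G H f \<longleftrightarrow> (\<forall>x\<in>fst G. f x \<in> fst H) \<and> (\<forall>(x,y)\<in>snd G. (f x, f y) \<in> snd H)"

definition is_subgraph :: "'a graph \<Rightarrow> 'a graph \<Rightarrow> bool" where
  "is_subgraph G' G \<longleftrightarrow> is_graph G' \<and> fst G' \<subseteq> fst G \<and> snd G' \<subseteq> snd G"

definition is_core :: "'a graph \<Rightarrow> bool" where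
  "is_core H \<longleftrightarrow> is_graph H \<and>
     \<not> (\<exists>H' f. is_subgraph H' H \<and> H' \<noteq> H \<and> is_hom H H' f)"

definition graph_iso :: "'a graph \<Rightarrow> 'b graph \<Rightarrow> bool" where
  "graph_iso G H \<longleftrightarrow> (\<exists>f. bij_betw f (fst G) (fst H) \<and>
     (\<forall>x\<in>fst G. \<forall>y\<in>fst G. (x,y) \<in> snd G \<longleftrightarrow> (f x, f y) \<in> snd H))"

definition K1 :: "nat graph" where "K1 = ({0}, {})"
definition K1_loop :: "nat graph" where "K1_loop = ({0}, {(0,0)})"
definition K2 :: "nat graph" where "K2 = ({0,1}, {(0,1),(1,0)})"

definition trivial_core :: "'a graph \<Rightarrow> bool" where
  "trivial_core H \<longleftrightarrow> graph_iso H K1 \<or> graph_iso H K1_loop \<or> graph_iso H K2"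

definition graph_power :: "'a graph \<Rightarrow> nat \<Rightarrow> 'a list graph" where
  "graph_power H m =
     ({xs. length xs = m \<and> set xs \<subseteq> fst H},
      {(xs, ys). length xs = m \<and> length ys = m \<and> (\<forall>i<m. (xs ! i, ys ! i) \<in> snd H)})"

definition idempotent_map :: "'a graph \<Rightarrow> nat \<Rightarrow> ('a list \<Rightarrow> 'a) \<Rightarrow> bool" where
  "idempotent_map H m f \<longleftrightarrow> (\<forall>x\<in>fst H. f (replicate m x) = x)"

definition projective :: "'a graph \<Rightarrow> bool" where
  "projective H \<longleftrightarrow> (\<forall>m\<ge>2. \<forall>f. is_hom (graph_power H m) H f \<and> idempotent_map H m f \<longrightarrow>
     (\<exists>i<m. \<forall>xs\<in>fst (graph_power H m). f xs = xs ! i))"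

end

theory Submission
  imports Defs
begin

text \<open>Take for F the power H^k, where k is the number of ordered pairs of distinct vertices
  of H, and let u*, v* list the first and the second components of these pairs. Projections
  give (a). For (b), a homomorphism g: H^k \<rightarrow> H restricts on the diagonal to an endomorphism
  of the core H, hence to an automorphism; correcting g by its inverse gives an idempotent
  homomorphism, which by projectivity is a projection, and u*, v* differ in every coordinate.
  Finally H^k is relabelled by natural numbers.\<close>

lemma is_hom_comp:
  assumes "is_hom F G g" and "is_hom G H f"
  shows "is_hom F H (f \<circ> g)"
  using assms unfolding is_hom_def by fastforce

lemma is_graph_graph_power:
  assumes "is_graph H"
  shows "is_graph (graph_power H m)"
proof -
  have "fst (graph_power H m) = {xs. set xs \<subseteq> fst H \<and> length xs = m}"
    unfolding graph_power_def by auto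
  then have "finite (fst (graph_power H m))"
    using assms finite_lists_length_eq unfolding is_graph_def by auto
  moreover have "snd (graph_power H m) \<subseteq> fst (graph_power H m) \<times> fst (graph_power H m)"
    using assms unfolding graph_power_def is_graph_def by (auto simp: in_set_conv_nth) blast+
  moreover have "sym (snd (graph_power H m))"
    using assms unfolding graph_power_def is_graph_def sym_def by auto
  ultimately show ?thesis by (simp add: is_graph_def)
qed

lemma is_hom_graph_power_nth:
  assumes "i < m"
  shows "is_hom (graph_power H m) H (\<lambda>xs. xs ! i)"
  using assms unfolding is_hom_def graph_power_def by auto

lemma is_hom_graph_power_replicate: "is_hom H (graph_power H m) (replicate m)"
  unfolding is_hom_def graph_power_def by auto

lemma core_endomorphism_surj:
  assumes "is_core H" and "is_hom H H s"
  shows "s ` fst H = fst H"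
proof (rule ccontr)
  assume proper: "s ` fst H \<noteq> fst H"
  define H' where "H' = (s ` fst H, snd H \<inter> (s ` fst H \<times> s ` fst H))"
  have "is_graph H" using assms(1) by (simp add: is_core_def)
  then have "is_subgraph H' H"
    using assms(2) unfolding is_subgraph_def is_graph_def is_hom_def H'_def
    by (auto simp: sym_def)
  moreover have "H' \<noteq> H" using proper unfolding H'_def by (metis fst_conv)
  moreover have "is_hom H H' s"
    using assms(2) \<open>is_graph H\<close> unfolding is_hom_def is_graph_def H'_def by auto
  ultimately show False using assms(1) unfolding is_core_def by blast
qed

text \<open>A surjective endomorphism of a finite graph is injective on vertices, hence on edges,
  hence it also maps the edge set onto itself; this is what makes its inverse a homomorphism.\<close>

lemma core_endomorphism_left_inverse:
  assumes "is_core H" and "is_hom H H s"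
  obtains t where "is_hom H H t" and "\<And>x. x \<in> fst H \<Longrightarrow> t (s x) = x"
proof -
  obtain V E where H: "H = (V, E)" by (cases H)
  have fin: "finite V" and EV: "E \<subseteq> V \<times> V"
    using assms(1) H by (auto simp: is_core_def is_graph_def)
  have onto: "s ` V = V" using core_endomorphism_surj[OF assms] H by simp
  have inj: "inj_on s V" using finite_surj_inj[OF fin] onto by simp
  define s2 where "s2 = (\<lambda>(x, y). (s x, s y))"
  have "finite E" using fin EV by (meson finite_SigmaI finite_subset)
  moreover have "s2 ` E \<subseteq> E" using assms(2) H unfolding is_hom_def s2_def by auto
  moreover have "inj_on s2 E" using inj EV unfolding s2_def inj_on_def by auto
  ultimately have edges_onto: "s2 ` E = E" using endo_inj_surj by blast
  have "is_hom H H (inv_into V s)"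
    unfolding is_hom_def H
  proof (intro conjI ballI)
    fix x assume "x \<in> fst (V, E)"
    then show "inv_into V s x \<in> fst (V, E)" using onto by (metis fst_conv inv_into_into)
  next
    fix p assume "p \<in> snd (V, E)"
    then have "p \<in> s2 ` E" using edges_onto by simp
    then obtain a b where "(a, b) \<in> E" "p = (s a, s b)" unfolding s2_def by auto
    moreover from this(1) have "a \<in> V" "b \<in> V" using EV by auto
    ultimately show "case p of (x, y) \<Rightarrow> (inv_into V s x, inv_into V s y) \<in> snd (V, E)"
      using inj by simp
  qed
  then show thesis using that inj H by simp
qed

lemma projective_core_hom_factors_projection:
  assumes "is_core H" and "projective H" and "2 \<le> m"
    and "is_hom (graph_power H m) H g"
  obtains i t where "i < m" and "\<And>xs. xs \<in> fst (graph_power H m) \<Longrightarrow> t (g xs) = xs ! i"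
proof -
  have "is_hom H H (g \<circ> replicate m)"
    using is_hom_comp[OF is_hom_graph_power_replicate assms(4)] .
  then obtain t where t: "is_hom H H t" "\<And>x. x \<in> fst H \<Longrightarrow> t (g (replicate m x)) = x"
    using core_endomorphism_left_inverse[OF assms(1)] by (metis comp_apply)
  have "is_hom (graph_power H m) H (t \<circ> g)" using is_hom_comp[OF assms(4) t(1)] .
  moreover have "idempotent_map H m (t \<circ> g)" using t(2) by (simp add: idempotent_map_def)
  ultimately obtain i where "i < m" "\<forall>xs\<in>fst (graph_power H m). (t \<circ> g) xs = xs ! i"
    using assms(2,3) unfolding projective_def by blast
  then show thesis using that by (metis comp_apply)
qed

definition pair_gadget :: "'b graph \<Rightarrow> 'a graph \<Rightarrow> 'b \<Rightarrow> 'b \<Rightarrow> bool" where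
  "pair_gadget F H u v \<longleftrightarrow> u \<in> fst F \<and> v \<in> fst F \<and>
     (\<forall>x\<in>fst H. \<forall>y\<in>fst H. x \<noteq> y \<longrightarrow> (\<exists>f. is_hom F H f \<and> f u = x \<and> f v = y)) \<and>
     (\<forall>f. is_hom F H f \<longrightarrow> f u \<noteq> f v)"

lemma pair_gadget_retract:
  assumes "pair_gadget G H u v" and "is_hom F G h" and "is_hom G F r"
    and "h (r u) = u" and "h (r v) = v"
  shows "pair_gadget F H (r u) (r v)"
  unfolding pair_gadget_def
proof (intro conjI ballI impI allI)
  show "r u \<in> fst F" "r v \<in> fst F"
    using assms(1,3) unfolding pair_gadget_def is_hom_def by auto
next
  fix x y assume "x \<in> fst H" "y \<in> fst H" "x \<noteq> y"
  then obtain g where "is_hom G H g" "g u = x" "g v = y"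
    using assms(1) unfolding pair_gadget_def by blast
  then show "\<exists>f. is_hom F H f \<and> f (r u) = x \<and> f (r v) = y"
    using is_hom_comp[OF assms(2)] assms(4,5) by (intro exI[of _ "g \<circ> h"]) simp
next
  fix f assume "is_hom F H f"
  then have "(f \<circ> r) u \<noteq> (f \<circ> r) v"
    using is_hom_comp[OF assms(3)] assms(1) unfolding pair_gadget_def by blast
  then show "f (r u) \<noteq> f (r v)" by simp
qed

lemma graph_nat_relabelling:
  assumes "is_graph G"
  obtains F :: "nat graph" and h r where "is_graph F" and "is_hom F G h" and "is_hom G F r"
    and "\<And>x. x \<in> fst G \<Longrightarrow> h (r x) = x"
proof -
  obtain h where h: "bij_betw h {0..<card (fst G)} (fst G)"
    using assms ex_bij_betw_nat_finite by (auto simp: is_graph_def)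
  define N where "N = card (fst G)"
  define F :: "nat graph" where "F = ({0..<N}, {(i, j). i < N \<and> j < N \<and> (h i, h j) \<in> snd G})"
  define r where "r = inv_into {0..<N} h"
  have r: "x \<in> fst G \<Longrightarrow> r x \<in> {0..<N} \<and> h (r x) = x" for x
    using h unfolding r_def N_def by (metis bij_betw_def inv_into_into f_inv_into_f)
  have "is_graph F" using assms unfolding F_def is_graph_def by (auto simp: sym_def)
  moreover have "is_hom F G h" using h unfolding is_hom_def F_def N_def bij_betw_def by auto
  moreover have "is_hom G F r"
    using assms r unfolding is_hom_def F_def is_graph_def by fastforce
  ultimately show thesis using that r by blast
qed

lemma pair_gadget_graph_power:
  assumes "is_core H" and "projective H" and "a \<in> fst H" and "b \<in> fst H" and "a \<noteq> b"
  obtains k u v where "pair_gadget (graph_power H k) H u v"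
proof -
  define D where "D = {(x, y). x \<in> fst H \<and> y \<in> fst H \<and> x \<noteq> y}"
  have "finite (fst H)" using assms(1) by (simp add: is_core_def is_graph_def)
  moreover have "D \<subseteq> fst H \<times> fst H" unfolding D_def by auto
  ultimately have "finite D" by (meson finite_SigmaI finite_subset)
  then obtain P where P: "set P = D" "distinct P" using finite_distinct_list by blast
  define k where "k = length P"
  have "{(a, b), (b, a)} \<subseteq> D" using assms(3-5) D_def by auto
  then have "card {(a, b), (b, a)} \<le> card D" using card_mono[OF \<open>finite D\<close>] by blast
  then have k2: "2 \<le> k" using assms(5) distinct_card[OF P(2)] P(1) k_def by simp
  define u where "u = map fst P"
  define v where "v = map snd P"
  have coord: "i < k \<Longrightarrow> P ! i = (u ! i, v ! i)" for i by (simp add: u_def v_def k_def)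
  have "set u = fst ` D" "set v = snd ` D" by (simp_all add: u_def v_def P(1))
  moreover have "fst ` D \<subseteq> fst H" "snd ` D \<subseteq> fst H" unfolding D_def by auto
  ultimately have uv: "u \<in> fst (graph_power H k)" "v \<in> fst (graph_power H k)"
    unfolding graph_power_def by (simp_all add: u_def v_def k_def)
  have realize: "\<exists>f. is_hom (graph_power H k) H f \<and> f u = x \<and> f v = y"
    if "x \<in> fst H" "y \<in> fst H" "x \<noteq> y" for x y
  proof -
    have "(x, y) \<in> set P" using that P D_def by auto
    then obtain i where "i < k" "P ! i = (x, y)" unfolding k_def by (metis in_set_conv_nth)
    with coord have "u ! i = x" "v ! i = y" by simp_all
    with is_hom_graph_power_nth[OF \<open>i < k\<close>] show ?thesis by blast
  qed
  have separate: "g u \<noteq> g v" if g: "is_hom (graph_power H k) H g" for g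
  proof
    assume "g u = g v"
    obtain i t where "i < k" and t: "\<And>xs. xs \<in> fst (graph_power H k) \<Longrightarrow> t (g xs) = xs ! i"
      using projective_core_hom_factors_projection[OF assms(1,2) k2 g] by blast
    have "u ! i = v ! i" using t[OF uv(1)] t[OF uv(2)] \<open>g u = g v\<close> by simp
    moreover have "P ! i \<in> D" using P(1) \<open>i < k\<close> k_def nth_mem by blast
    ultimately show False using coord[OF \<open>i < k\<close>] unfolding D_def by simp
  qed
  have "pair_gadget (graph_power H k) H u v"
    unfolding pair_gadget_def using uv realize separate by blast
  then show thesis by (rule that)
qed

lemma trivial_core_singleton:
  assumes "is_graph H" and "fst H = {a}"
  shows "trivial_core H"
proof -
  have "snd H = {} \<or> snd H = {(a, a)}" using assms by (auto simp: is_graph_def)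
  moreover have "bij_betw (\<lambda>_. 0::nat) {a} {0}" by (simp add: bij_betw_def)
  ultimately show ?thesis
    using assms unfolding trivial_core_def graph_iso_def K1_def K1_loop_def
    by (metis empty_iff fst_conv insert_iff singletonD snd_conv)
qed

theorem lemma9:
  fixes H :: "'a graph"
  assumes "is_core H" and "\<not> trivial_core H" and "projective H"
  shows "\<exists>(F :: nat graph) u v. is_graph F \<and> u \<in> fst F \<and> v \<in> fst F \<and>
           (\<forall>x\<in>fst H. \<forall>y\<in>fst H. x \<noteq> y \<longrightarrow>
              (\<exists>f. is_hom F H f \<and> f u = x \<and> f v = y)) \<and>
           (\<forall>f. is_hom F H f \<longrightarrow> f u \<noteq> f v)"
proof -
  have "\<exists>F :: nat graph. \<exists>u v. is_graph F \<and> pair_gadget F H u v"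
  proof (cases "fst H = {}")
    case True
    \<comment> \<open>the empty graph is a non-trivial core, and (b) holds vacuously for it\<close>
    then have "pair_gadget (({0}, {}) :: nat graph) H 0 0"
      by (simp add: pair_gadget_def is_hom_def)
    moreover have "is_graph (({0}, {}) :: nat graph)" by (simp add: is_graph_def sym_def)
    ultimately show ?thesis by blast
  next
    case False
    have "is_graph H" using assms(1) by (simp add: is_core_def)
    obtain a where "a \<in> fst H" using False by blast
    moreover obtain b where "b \<in> fst H" "a \<noteq> b"
      using trivial_core_singleton[OF \<open>is_graph H\<close>, of a] assms(2) \<open>a \<in> fst H\<close> by blast
    ultimately obtain k u v where gadget: "pair_gadget (graph_power H k) H u v"
      using pair_gadget_graph_power[OF assms(1,3)] by blast
    obtain F :: "nat graph" and h r where "is_graph F" "is_hom F (graph_power H k) h"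
      "is_hom (graph_power H k) F r" and retract: "\<And>x. x \<in> fst (graph_power H k) \<Longrightarrow> h (r x) = x"
      using graph_nat_relabelling[OF is_graph_graph_power[OF \<open>is_graph H\<close>, of k]] by blast
    moreover have "h (r u) = u" "h (r v) = v"
      using gadget retract unfolding pair_gadget_def by simp_all
    ultimately show ?thesis using pair_gadget_retract[OF gadget] by blast
  qed
  then show ?thesis unfolding pair_gadget_def by blast
qed

end
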